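(* Let $G$ be an additive abelian group and let $S\subseteq G$ be a pointed reflection subspace of $G$. (i)(a) For every subset $T\subseteq S$, the set $S_T:=S\cap\langle T\rangle$ is a pointed reflection subspace of the group $\langle T\rangle$. In particular, if $G$ is torsion free and $T$ is finite, then $S_T$ is a semilattice in $\langle T\rangle$. (i)(b) Let $\mathcal M_S$ denote the set of all finite subsets of $S$, directed by inclusion. Then $S$ is the direct union of the family $\{S_T\}_{T\in\mathcal M_S}$. (ii) Let $\mathcal S$ be a family of subsets of $G$ which is a directed set under inclusion, such that each $S'\in\mathcal S$ is a pointed reflection subspace of its $\mathbb Z$-span $\langle S'\rangle$ in $G$. If $G=\bigcup_{S'\in\mathcal S}\langle S'\rangle$, then the direct union $\bigcup_{S'\in\mathcal S}S'$ is a pointed reflection subspace of $G$.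
   Context: For a subset $X$ of an abelian group, $\langle X\rangle$ denotes the subgroup generated by $X$. A symmetric reflection subspace of an abelian group $H$ is a subset $S\subseteq H$ with $\langle S\rangle=H$ and $S-2S\subseteq S$; it is a pointed reflection subspace if moreover $0\in S$. If $H$ is free abelian of finite rank, a pointed reflection subspace of $H$ is called a semilattice in $H$. A set $C$ is the direct union of a family $\{C_i\}_{i\in I}$ of subsets of $C$, directed under inclusion, if $C=\bigcup_{i\in I}C_i$. *)

theory Defs
  imports Main
begin

text \<open>Additive abelian group: a type of class ab_group_add; G is UNIV.\<close>

definition subgroup_add :: "'a::ab_group_add set \<Rightarrow> bool" where
  "subgroup_add H \<longleftrightarrow> 0 \<in> H \<and> (\<forall>x\<in>H. \<forall>y\<in>H. x - y \<in> H)"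

definition gen :: "'a::ab_group_add set \<Rightarrow> 'a set" where
  "gen X = \<Inter>{H. subgroup_add H \<and> X \<subseteq> H}"

definition nsmul :: "nat \<Rightarrow> 'a::ab_group_add \<Rightarrow> 'a" where
  "nsmul n x = (\<Sum>i<n. x)"

definition zsmul :: "int \<Rightarrow> 'a::ab_group_add \<Rightarrow> 'a" where
  "zsmul k x = (if k \<ge> 0 then nsmul (nat k) x else - nsmul (nat (- k)) x)"

definition torsion_free :: "'a::ab_group_add itself \<Rightarrow> bool" where
  "torsion_free _ \<longleftrightarrow> (\<forall>(x::'a) n. n > 0 \<and> nsmul n x = 0 \<longrightarrow> x = 0)"

definition free_abelian_finite_rank :: "'a::ab_group_add set \<Rightarrow> bool" where
  "free_abelian_finite_rank H \<longleftrightarrow>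
     (\<exists>B. finite B \<and> B \<subseteq> H \<and> gen B = H \<and>
        (\<forall>c::'a \<Rightarrow> int. (\<Sum>b\<in>B. zsmul (c b) b) = 0 \<longrightarrow> (\<forall>b\<in>B. c b = 0)))"

definition symmetric_reflection_subspace :: "'a::ab_group_add set \<Rightarrow> 'a set \<Rightarrow> bool" where
  "symmetric_reflection_subspace H S \<longleftrightarrow>
     S \<subseteq> H \<and> gen S = H \<and> (\<forall>x\<in>S. \<forall>y\<in>S. x - (y + y) \<in> S)"

definition pointed_reflection_subspace :: "'a::ab_group_add set \<Rightarrow> 'a set \<Rightarrow> bool" where
  "pointed_reflection_subspace H S \<longleftrightarrow> symmetric_reflection_subspace H S \<and> 0 \<in> S"

definition semilattice_in :: "'a::ab_group_add set \<Rightarrow> 'a set \<Rightarrow> bool" where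
  "semilattice_in H S \<longleftrightarrow> free_abelian_finite_rank H \<and> pointed_reflection_subspace H S"

definition directed_incl :: "'a set set \<Rightarrow> bool" where
  "directed_incl F \<longleftrightarrow> F \<noteq> {} \<and> (\<forall>A\<in>F. \<forall>B\<in>F. \<exists>C\<in>F. A \<union> B \<subseteq> C)"

definition direct_union :: "'a set \<Rightarrow> 'a set set \<Rightarrow> bool" where
  "direct_union C F \<longleftrightarrow> directed_incl F \<and> (\<forall>A\<in>F. A \<subseteq> C) \<and> C = \<Union>F"

end

theory Submission
  imports Defs
begin

text \<open>Parts (i)(a), (i)(b) and (ii) are closure arguments; the content is that a finitely
  generated torsion-free abelian group is free. Take a generating set \<open>T\<close> with a nontrivial
  relation \<open>\<Sum> c\<^sub>t t = 0\<close>. If only one coefficient is nonzero, that generator is torsion, hence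
  \<open>0\<close>, and can be dropped. Otherwise pick \<open>a \<noteq> b\<close> with \<open>0 < |c\<^sub>b| \<le> |c\<^sub>a|\<close> and replace \<open>b\<close> by
  \<open>b' = b \<plusminus> a\<close>: the span is unchanged and the relation becomes one with coefficient
  \<open>c\<^sub>a \<mp> c\<^sub>b\<close> at \<open>a\<close>, so its weight \<open>\<Sum> |c\<^sub>t|\<close> drops by \<open>|c\<^sub>b|\<close>. Descent on the weight ends
  with a strictly smaller generating set (when \<open>b'\<close> is \<open>b\<close> or already lies in \<open>T\<close>), and
  descent on the size of \<open>T\<close> ends with an independent one.\<close>

lemma nsmul_0 [simp]: "nsmul 0 x = 0"
  by (simp add: nsmul_def)

lemma nsmul_Suc: "nsmul (Suc n) x = x + nsmul n x"
  by (simp add: nsmul_def add.commute)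

lemma nsmul_add_left: "nsmul (m + n) x = nsmul m x + nsmul n x"
  by (induct m) (simp_all add: nsmul_Suc add.assoc)

lemma nsmul_add_right: "nsmul n (x + y) = nsmul n x + nsmul n y"
  by (simp add: nsmul_def sum.distrib)

lemma nsmul_diff_right: "nsmul n (x - y) = nsmul n x - nsmul n y"
  by (simp add: nsmul_def sum_subtractf)

lemma nsmul_mult: "nsmul (m * n) x = nsmul m (nsmul n x)"
  by (induct m) (simp_all add: nsmul_Suc nsmul_add_left)

lemma zsmul_of_nat [simp]: "zsmul (int n) x = nsmul n x"
  by (simp add: zsmul_def)

lemma zsmul_0_left [simp]: "zsmul 0 x = 0"
  by (simp add: zsmul_def)

lemma zsmul_minus_of_nat [simp]: "zsmul (- int n) x = - nsmul n x"
  by (cases "n = 0") (simp_all add: zsmul_def)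

lemma zsmul_of_nat_diff: "zsmul (int m - int n) x = nsmul m x - nsmul n x"
proof (cases "n \<le> m")
  case True
  then have eq: "int m - int n = int (m - n)"
    by simp
  show ?thesis
    unfolding eq zsmul_of_nat using nsmul_add_left[of "m - n" n x] True by (simp add: eq_diff_eq)
next
  case False
  then have eq: "int m - int n = - int (n - m)"
    by simp
  show ?thesis
    unfolding eq zsmul_minus_of_nat using nsmul_add_left[of "n - m" m x] False
    by (simp add: minus_diff_eq eq_diff_eq)
qed

lemma zsmul_eq_nsmul_diff: "zsmul k x = nsmul (nat k) x - nsmul (nat (- k)) x"
proof -
  have "k = int (nat k) - int (nat (- k))"
    by simp
  then show ?thesis
    by (metis zsmul_of_nat_diff)
qed

lemma zsmul_add_left: "zsmul (k + l) x = zsmul k x + zsmul l x"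
proof -
  have "k + l = int (nat k + nat l) - int (nat (- k) + nat (- l))"
    by simp
  then have "zsmul (k + l) x = nsmul (nat k + nat l) x - nsmul (nat (- k) + nat (- l)) x"
    by (metis zsmul_of_nat_diff)
  then show ?thesis
    by (simp add: nsmul_add_left zsmul_eq_nsmul_diff[of k] zsmul_eq_nsmul_diff[of l])
qed

lemma zsmul_diff_left: "zsmul (k - l) x = zsmul k x - zsmul l x"
  using zsmul_add_left[of k "- l" x] by (simp add: zsmul_eq_nsmul_diff)

lemma zsmul_add_right: "zsmul k (x + y) = zsmul k x + zsmul k y"
  by (simp add: zsmul_eq_nsmul_diff nsmul_add_right)

lemma zsmul_mult: "zsmul (k * l) x = zsmul k (zsmul l x)"
proof -
  define p q r s where "p = nat k" "q = nat (- k)" "r = nat l" "s = nat (- l)"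
  have "k * l = int (p * r + q * s) - int (p * s + q * r)"
    unfolding p_q_r_s_def by (cases "k \<ge> 0"; cases "l \<ge> 0") (simp_all add: algebra_simps)
  then have "zsmul (k * l) x = nsmul (p * r + q * s) x - nsmul (p * s + q * r) x"
    using zsmul_of_nat_diff by metis
  also have "\<dots> = nsmul p (nsmul r x - nsmul s x) - nsmul q (nsmul r x - nsmul s x)"
    by (simp add: nsmul_add_left nsmul_diff_right mult.commute flip: nsmul_mult)
  also have "\<dots> = zsmul k (zsmul l x)"
    unfolding p_q_r_s_def by (simp add: zsmul_eq_nsmul_diff[of k] zsmul_eq_nsmul_diff[of l])
  finally show ?thesis .
qed

lemma torsion_free_zsmul_eq_0:
  assumes "torsion_free TYPE('a::ab_group_add)" "zsmul k (x::'a) = 0" "k \<noteq> 0"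
  shows "x = 0"
proof -
  have "nsmul (nat \<bar>k\<bar>) x = 0"
    using assms(2) by (cases "k \<ge> 0") (simp_all add: zsmul_def)
  moreover have "nat \<bar>k\<bar> > 0"
    using assms(3) by simp
  moreover have "\<forall>n. 0 < n \<and> nsmul n x = 0 \<longrightarrow> x = 0"
    using assms(1) unfolding torsion_free_def by (rule spec)
  ultimately show ?thesis
    by blast
qed

lemma subgroup_add_minus: "subgroup_add H \<Longrightarrow> x \<in> H \<Longrightarrow> - x \<in> H"
  unfolding subgroup_add_def by (metis diff_0)

lemma subgroup_add_add: "subgroup_add H \<Longrightarrow> x \<in> H \<Longrightarrow> y \<in> H \<Longrightarrow> x + y \<in> H"
  using subgroup_add_minus unfolding subgroup_add_def by (metis diff_minus_eq_add)

lemma subgroup_add_diff: "subgroup_add H \<Longrightarrow> x \<in> H \<Longrightarrow> y \<in> H \<Longrightarrow> x - y \<in> H"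
  unfolding subgroup_add_def by blast

lemma subgroup_add_nsmul: "subgroup_add H \<Longrightarrow> x \<in> H \<Longrightarrow> nsmul n x \<in> H"
  by (induct n) (auto simp: nsmul_Suc subgroup_add_add subgroup_add_def)

lemma subgroup_add_zsmul: "subgroup_add H \<Longrightarrow> x \<in> H \<Longrightarrow> zsmul k x \<in> H"
  by (simp add: zsmul_eq_nsmul_diff subgroup_add_diff subgroup_add_nsmul)

lemma subgroup_add_gen: "subgroup_add (gen X)"
  unfolding gen_def subgroup_add_def by auto

lemma gen_superset: "X \<subseteq> gen X"
  unfolding gen_def by auto

lemma gen_least: "subgroup_add H \<Longrightarrow> X \<subseteq> H \<Longrightarrow> gen X \<subseteq> H"
  unfolding gen_def by auto

lemma gen_mono: "X \<subseteq> Y \<Longrightarrow> gen X \<subseteq> gen Y"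
  by (meson gen_least gen_superset order_trans subgroup_add_gen)

lemma gen_eqI: "X \<subseteq> gen Y \<Longrightarrow> Y \<subseteq> gen X \<Longrightarrow> gen X = gen Y"
  by (simp add: gen_least subgroup_add_gen subset_antisym)

lemma zero_in_gen: "0 \<in> gen X"
  using subgroup_add_gen unfolding subgroup_add_def by blast

lemma gen_Diff_redundant:
  assumes "x \<in> gen (T - {x})"
  shows "gen (T - {x}) = gen T"
  using assms gen_superset[of T] gen_superset[of "T - {x}"] by (intro gen_eqI) auto

lemma gen_exchange:
  assumes "a \<in> T" "b \<in> T" "a \<noteq> b"
  shows "gen (insert (b + zsmul e a) (T - {b})) = gen T"
proof (rule gen_eqI)
  have "a \<in> gen T" "b \<in> gen T"
    using assms gen_superset by blast+
  then have "b + zsmul e a \<in> gen T"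
    by (simp add: subgroup_add_add subgroup_add_gen subgroup_add_zsmul)
  then show "insert (b + zsmul e a) (T - {b}) \<subseteq> gen T"
    using gen_superset[of T] by blast
next
  let ?T' = "insert (b + zsmul e a) (T - {b})"
  have "a \<in> gen ?T'" "b + zsmul e a \<in> gen ?T'"
    using assms gen_superset[of ?T'] by blast+
  then have "b \<in> gen ?T'"
    by (metis add_diff_cancel subgroup_add_diff subgroup_add_gen subgroup_add_zsmul)
  then show "T \<subseteq> gen ?T'"
    using gen_superset[of ?T'] by auto
qed

lemma sum_remove_two:
  assumes "finite T" "a \<in> T" "b \<in> T" "a \<noteq> b"
  shows "(\<Sum>t\<in>T. g t) = g a + g b + (\<Sum>t\<in>T - {a, b}. g t :: 'b::comm_monoid_add)"
proof -
  have "(\<Sum>t\<in>T. g t) = g a + (\<Sum>t\<in>T - {a}. g t)"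
    using assms by (simp add: sum.remove)
  also have "(\<Sum>t\<in>T - {a}. g t) = g b + (\<Sum>t\<in>T - {a} - {b}. g t)"
    using assms by (simp add: sum.remove)
  finally show ?thesis
    by (simp add: add.assoc set_diff_eq)
qed

lemma relation_exchange:
  fixes T :: "'a::ab_group_add set"
  assumes "finite T" "a \<in> T" "b \<in> T" "a \<noteq> b"
    and b'_def: "b' = b + zsmul e a" and "b' \<notin> T"
    and rel: "(\<Sum>t\<in>T. zsmul (c t) t) = 0"
  defines "c' \<equiv> (c(a := c a - e * c b))(b' := c b)"
  shows "(\<Sum>t\<in>insert b' (T - {b}). zsmul (c' t) t) = 0"
    and "(\<Sum>t\<in>insert b' (T - {b}). nat \<bar>c' t\<bar>)
           = nat \<bar>c a - e * c b\<bar> + nat \<bar>c b\<bar> + (\<Sum>t\<in>T - {a, b}. nat \<bar>c t\<bar>)"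
proof -
  let ?T' = "insert b' (T - {b})"
  have b': "b' \<notin> T" "a \<noteq> b'"
    using assms unfolding b'_def by auto
  have rest: "?T' - {a, b'} = T - {a, b}"
    using b' by auto
  have split: "(\<Sum>t\<in>?T'. g t) = g a + g b' + (\<Sum>t\<in>T - {a, b}. g t)"
    for g :: "'a \<Rightarrow> 'b::comm_monoid_add"
    using sum_remove_two[of ?T' a b' g] assms(1,2,4) b' by (simp add: rest)
  have same: "(\<Sum>t\<in>T - {a, b}. f (c' t) t) = (\<Sum>t\<in>T - {a, b}. f (c t) t)"
    for f :: "int \<Rightarrow> 'a \<Rightarrow> 'b::comm_monoid_add"
    using b' by (intro sum.cong) (auto simp: c'_def)
  have "zsmul (c a - e * c b) a + zsmul (c b) b' = zsmul (c a) a + zsmul (c b) b"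
    unfolding b'_def by (simp add: zsmul_add_right zsmul_diff_left mult.commute flip: zsmul_mult)
  then have "(\<Sum>t\<in>?T'. zsmul (c' t) t) = (\<Sum>t\<in>T. zsmul (c t) t)"
    using split[of "\<lambda>t. zsmul (c' t) t"] same[of zsmul] b'(2)
      sum_remove_two[OF assms(1-4), of "\<lambda>t. zsmul (c t) t"]
    by (simp add: c'_def)
  with rel show "(\<Sum>t\<in>?T'. zsmul (c' t) t) = 0"
    by simp
  show "(\<Sum>t\<in>?T'. nat \<bar>c' t\<bar>) = nat \<bar>c a - e * c b\<bar> + nat \<bar>c b\<bar> + (\<Sum>t\<in>T - {a, b}. nat \<bar>c t\<bar>)"
    using split[of "\<lambda>t. nat \<bar>c' t\<bar>"] same[of "\<lambda>k t. nat \<bar>k\<bar>"] b'(2) by (simp add: c'_def)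
qed

lemma abs_diff_sgn_mult_less:
  fixes x y :: "'a::linordered_idom"
  assumes "y \<noteq> 0" "\<bar>y\<bar> \<le> \<bar>x\<bar>"
  shows "\<bar>x - sgn x * sgn y * y\<bar> < \<bar>x\<bar>"
  using assms by (auto simp: sgn_if abs_if split: if_splits)

lemma exchange_lowers_weight:
  fixes T :: "'a::ab_group_add set"
  assumes fin: "finite T" and ab: "a \<in> T" "b \<in> T" "a \<noteq> b" "c b \<noteq> 0"
    and smaller: "\<bar>c a - e * c b\<bar> < \<bar>c a\<bar>" and b': "b + zsmul e a \<notin> T"
    and rel: "(\<Sum>t\<in>T. zsmul (c t) t) = 0"
  obtains T' c' t' where "finite T'" "card T' = card T" "gen T' = gen T"
    "(\<Sum>t\<in>T'. zsmul (c' t) t) = 0" "t' \<in> T'" "c' t' \<noteq> 0"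
    "(\<Sum>t\<in>T'. nat \<bar>c' t\<bar>) < (\<Sum>t\<in>T. nat \<bar>c t\<bar>)"
proof -
  define b' where "b' = b + zsmul e a"
  define c' where "c' = (c(a := c a - e * c b))(b' := c b)"
  let ?T' = "insert b' (T - {b})"
  have "nat \<bar>c a - e * c b\<bar> < nat \<bar>c a\<bar>"
    using smaller by simp
  then have "(\<Sum>t\<in>?T'. nat \<bar>c' t\<bar>) < (\<Sum>t\<in>T. nat \<bar>c t\<bar>)"
    using relation_exchange(2)[OF fin ab(1-3) b'_def _ rel, folded c'_def] b' b'_def
      sum_remove_two[OF fin ab(1-3), of "\<lambda>t. nat \<bar>c t\<bar>"]
    by simp
  moreover have "finite ?T'"
    using fin by simp
  moreover have "card ?T' = card T"
    using fin b' card_Suc_Diff1[OF fin ab(2)] by (simp add: b'_def)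
  moreover have "gen ?T' = gen T"
    unfolding b'_def by (rule gen_exchange[OF ab(1-3)])
  moreover have "(\<Sum>t\<in>?T'. zsmul (c' t) t) = 0"
    using relation_exchange(1)[OF fin ab(1-3) b'_def _ rel, folded c'_def] b' b'_def by blast
  moreover have "b' \<in> ?T'" "c' b' \<noteq> 0"
    using ab(4) by (simp_all add: c'_def)
  ultimately show ?thesis
    using that by blast
qed

lemma relation_shrinks_generators:
  fixes T :: "'a::ab_group_add set"
  assumes tf: "torsion_free TYPE('a)" and "finite T"
    and "(\<Sum>t\<in>T. zsmul (c t) t) = 0" and "t\<^sub>0 \<in> T" "c t\<^sub>0 \<noteq> 0"
  shows "\<exists>T'. finite T' \<and> card T' < card T \<and> gen T' = gen T"
  using assms(2-)
proof (induction "\<Sum>t\<in>T. nat \<bar>c t\<bar>" arbitrary: T c t\<^sub>0 rule: less_induct)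
  case less
  note fin = \<open>finite T\<close> and rel = \<open>(\<Sum>t\<in>T. zsmul (c t) t) = 0\<close>
  have drop_redundant: "\<exists>T'. finite T' \<and> card T' < card T \<and> gen T' = gen T"
    if "x \<in> T" "x \<in> gen (T - {x})" for x
    using fin card_Diff1_less[OF fin that(1)] gen_Diff_redundant[OF that(2)]
    by (intro exI[of _ "T - {x}"]) simp
  have drop_zero: ?case if "0 \<in> T"
    using drop_redundant[OF that zero_in_gen] .
  show ?case
  proof (cases "\<forall>t\<in>T - {t\<^sub>0}. c t = 0")
    case True
    then have "(\<Sum>t\<in>T. zsmul (c t) t) = zsmul (c t\<^sub>0) t\<^sub>0"
      using fin less.prems(3) by (simp add: sum.remove sum.neutral)
    then have "t\<^sub>0 = 0"
      using rel less.prems(4) torsion_free_zsmul_eq_0[OF tf] by simp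
    then show ?thesis
      using drop_zero less.prems(3) by blast
  next
    case False
    then obtain t\<^sub>1 where "t\<^sub>1 \<in> T" "t\<^sub>1 \<noteq> t\<^sub>0" "c t\<^sub>1 \<noteq> 0"
      by blast
    then obtain a b where ab: "a \<in> T" "b \<in> T" "a \<noteq> b" "c b \<noteq> 0" "\<bar>c b\<bar> \<le> \<bar>c a\<bar>"
      using less.prems(3,4) by (metis linorder_le_cases)
    define e where "e = sgn (c a) * sgn (c b)"
    have "e \<noteq> 0"
      using ab unfolding e_def by (auto simp: sgn_if)
    have smaller: "\<bar>c a - e * c b\<bar> < \<bar>c a\<bar>"
      using abs_diff_sgn_mult_less[OF ab(4,5)] unfolding e_def .
    define b' where "b' = b + zsmul e a"
    consider "b' \<in> T - {b}" | "b' = b" | "b' \<notin> T"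
      by blast
    then show ?thesis
    proof cases
      case 1
      then have "insert b' (T - {b}) = T - {b}"
        by blast
      then have "b \<in> gen (T - {b})"
        using gen_exchange[OF ab(1-3), of e] ab(2) gen_superset[of T] unfolding b'_def by auto
      then show ?thesis
        using drop_redundant ab(2) by blast
    next
      case 2
      then have "a = 0"
        using torsion_free_zsmul_eq_0[OF tf] \<open>e \<noteq> 0\<close> unfolding b'_def by simp
      then show ?thesis
        using drop_zero ab(1) by blast
    next
      case 3
      then obtain T' c' t' where "finite T'" "card T' = card T" "gen T' = gen T"
        "(\<Sum>t\<in>T'. zsmul (c' t) t) = 0" "t' \<in> T'" "c' t' \<noteq> 0"
        "(\<Sum>t\<in>T'. nat \<bar>c' t\<bar>) < (\<Sum>t\<in>T. nat \<bar>c t\<bar>)"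
        using exchange_lowers_weight[OF fin ab(1-4) smaller _ rel] unfolding b'_def by blast
      then obtain T'' where "finite T''" "card T'' < card T'" "gen T'' = gen T'"
        using less.hyps by blast
      then show ?thesis
        using \<open>card T' = card T\<close> \<open>gen T' = gen T\<close> by auto
    qed
  qed
qed

lemma torsion_free_finitely_generated_free:
  fixes T :: "'a::ab_group_add set"
  assumes tf: "torsion_free TYPE('a)"
  shows "finite T \<Longrightarrow> free_abelian_finite_rank (gen T)"
proof (induction "card T" arbitrary: T rule: less_induct)
  case less
  show ?case
  proof (cases "\<forall>c::'a \<Rightarrow> int. (\<Sum>t\<in>T. zsmul (c t) t) = 0 \<longrightarrow> (\<forall>t\<in>T. c t = 0)")
    case True
    then show ?thesis
      using less.prems gen_superset[of T] unfolding free_abelian_finite_rank_def by blast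
  next
    case False
    then obtain c t\<^sub>0 where "(\<Sum>t\<in>T. zsmul (c t) t) = 0" "t\<^sub>0 \<in> T" "c t\<^sub>0 \<noteq> 0"
      by blast
    then obtain T' where "finite T'" "card T' < card T" "gen T' = gen T"
      using relation_shrinks_generators[OF tf less.prems] by blast
    then show ?thesis
      using less.hyps by metis
  qed
qed

lemma pointed_reflection_subspace_Int_gen:
  assumes "pointed_reflection_subspace H S" "T \<subseteq> S"
  shows "pointed_reflection_subspace (gen T) (S \<inter> gen T)"
proof -
  have refl: "\<forall>x\<in>S. \<forall>y\<in>S. x - (y + y) \<in> S" and "0 \<in> S"
    using assms(1) unfolding pointed_reflection_subspace_def symmetric_reflection_subspace_def by auto
  have "gen (S \<inter> gen T) = gen T"
    using assms(2) gen_superset[of T] gen_superset[of "S \<inter> gen T"] by (intro gen_eqI) auto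
  moreover have "\<forall>x\<in>S \<inter> gen T. \<forall>y\<in>S \<inter> gen T. x - (y + y) \<in> S \<inter> gen T"
    using refl by (simp add: subgroup_add_add subgroup_add_diff subgroup_add_gen)
  ultimately show ?thesis
    using \<open>0 \<in> S\<close> zero_in_gen[of T]
    unfolding pointed_reflection_subspace_def symmetric_reflection_subspace_def by blast
qed

lemma direct_union_Int_gen_finite:
  "direct_union S ((\<lambda>T. S \<inter> gen T) ` {T. finite T \<and> T \<subseteq> S})"
proof -
  let ?F = "(\<lambda>T. S \<inter> gen T) ` {T. finite T \<and> T \<subseteq> S}"
  have joins: "\<exists>C\<in>?F. A \<union> B \<subseteq> C" if AB: "A \<in> ?F" "B \<in> ?F" for A B
  proof -
    obtain T\<^sub>1 T\<^sub>2 where "finite T\<^sub>1" "T\<^sub>1 \<subseteq> S" "A = S \<inter> gen T\<^sub>1"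
      and "finite T\<^sub>2" "T\<^sub>2 \<subseteq> S" "B = S \<inter> gen T\<^sub>2"
      using AB by blast
    moreover have "gen T\<^sub>1 \<union> gen T\<^sub>2 \<subseteq> gen (T\<^sub>1 \<union> T\<^sub>2)"
      by (simp add: gen_mono)
    ultimately show ?thesis
      by (intro bexI[of _ "S \<inter> gen (T\<^sub>1 \<union> T\<^sub>2)"]) auto
  qed
  have "directed_incl ?F"
    unfolding directed_incl_def
  proof (intro conjI ballI joins)
    show "?F \<noteq> {}"
      by blast
  qed
  moreover have "S \<subseteq> \<Union>?F"
  proof
    fix x assume "x \<in> S"
    then show "x \<in> \<Union>?F"
      using gen_superset[of "{x}"] by (intro UnionI[of "S \<inter> gen {x}"]) auto
  qed
  ultimately show ?thesis
    unfolding direct_union_def by blast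
qed

lemma pointed_reflection_subspace_Union_directed:
  assumes "directed_incl \<S>" "\<forall>S\<in>\<S>. pointed_reflection_subspace (gen S) S"
    and "UNIV = (\<Union>S\<in>\<S>. gen S)"
  shows "pointed_reflection_subspace UNIV (\<Union>\<S>)"
proof -
  have "gen S \<subseteq> gen (\<Union>\<S>)" if "S \<in> \<S>" for S
    using that by (intro gen_mono) blast
  then have "gen (\<Union>\<S>) = UNIV"
    using assms(3) by blast
  moreover have "x - (y + y) \<in> \<Union>\<S>" if x: "x \<in> \<Union>\<S>" and y: "y \<in> \<Union>\<S>" for x y
  proof -
    obtain A B where "A \<in> \<S>" "B \<in> \<S>" "x \<in> A" "y \<in> B"
      using x y by blast
    then obtain C where "C \<in> \<S>" "x \<in> C" "y \<in> C"
      using assms(1) unfolding directed_incl_def by blast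
    then show ?thesis
      using assms(2) unfolding pointed_reflection_subspace_def symmetric_reflection_subspace_def
      by blast
  qed
  moreover have "0 \<in> \<Union>\<S>"
    using assms(1,2) unfolding directed_incl_def pointed_reflection_subspace_def by blast
  ultimately show ?thesis
    unfolding pointed_reflection_subspace_def symmetric_reflection_subspace_def by blast
qed

theorem lemma1p2:
  fixes S :: "'a::ab_group_add set"
  shows "(pointed_reflection_subspace UNIV S \<longrightarrow>
          (\<forall>T. T \<subseteq> S \<longrightarrow> pointed_reflection_subspace (gen T) (S \<inter> gen T))
        \<and> (\<forall>T. torsion_free TYPE('a) \<and> T \<subseteq> S \<and> finite T \<longrightarrow> semilattice_in (gen T) (S \<inter> gen T))
        \<and> direct_union S ((\<lambda>T. S \<inter> gen T) ` {T. finite T \<and> T \<subseteq> S}))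
       \<and> (\<forall>\<S> :: 'a set set.
            directed_incl \<S> \<and> (\<forall>S'\<in>\<S>. pointed_reflection_subspace (gen S') S')
            \<and> UNIV = (\<Union>S'\<in>\<S>. gen S')
            \<longrightarrow> pointed_reflection_subspace UNIV (\<Union>\<S>))"
proof (intro conjI impI allI)
  assume S: "pointed_reflection_subspace UNIV S"
  show "pointed_reflection_subspace (gen T) (S \<inter> gen T)" if "T \<subseteq> S" for T
    using pointed_reflection_subspace_Int_gen[OF S that] .
  then show "semilattice_in (gen T) (S \<inter> gen T)"
    if "torsion_free TYPE('a) \<and> T \<subseteq> S \<and> finite T" for T
    using that torsion_free_finitely_generated_free unfolding semilattice_in_def by blast
  show "direct_union S ((\<lambda>T. S \<inter> gen T) ` {T. finite T \<and> T \<subseteq> S})"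
    by (rule direct_union_Int_gen_finite)
qed (use pointed_reflection_subspace_Union_directed in blast)

end
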